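(* Let $\mathcal{A}$ be a finite alphabet, $\mathbf{p}$ an irreducible pair on $\mathcal{A}$ and $\mathbf{q}$ a pair in the labeled Rauzy class of $\mathbf{p}$. Then $\mathcal{S}(\mathbf{q})=\mathcal{S}(\mathbf{p})$.
   Context: Let $n=\#\mathcal{A}$. A pair is $\mathbf{p}=(p_0,p_1)$ with $p_0,p_1:\mathcal{A}\to\{1,\dots,n\}$ bijections. Irreducible: $p_0^{-1}\{1,\dots,k\}\ne p_1^{-1}\{1,\dots,k\}$ for $1\le k<n$. Rauzy move of type $\varepsilon\in\{0,1\}$: $\varepsilon\mathbf{p}=(p'_0,p'_1)$, $p'_\varepsilon=p_\varepsilon$, and for $z=p_\varepsilon^{-1}(n)$, $p'_{1-\varepsilon}(b)=p_{1-\varepsilon}(b)$ if $p_{1-\varepsilon}(b)\le p_{1-\varepsilon}(z)$, $=p_{1-\varepsilon}(b)+1$ if $p_{1-\varepsilon}(z)<p_{1-\varepsilon}(b)<n$, $=p_{1-\varepsilon}(z)+1$ if $p_{1-\varepsilon}(b)=n$. The labeled Rauzy class of $\mathbf{p}$ is the set of pairs reachable from $\mathbf{p}$ by Rauzy moves. For irreducible $\mathbf{p}$, $\mathcal{S}(\mathbf{p}):\mathcal{A}\to\mathcal{A}$ is defined by $\mathcal{S}(\mathbf{p})(\alpha)=p_0^{-1}(1)$ if $p_1(\alpha)=1$; $=p_0^{-1}(p_0(p_1^{-1}(n))+1)$ if $p_1(\alpha)=p_1(p_0^{-1}(n))+1$; $=p_0^{-1}(p_0(p_1^{-1}(p_1(\alpha)-1))+1)$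 otherwise. *)

theory Defs
  imports "HOL-Library.Cardinality"
begin

type_synonym 'a rpair = "('a \<Rightarrow> nat) \<times> ('a \<Rightarrow> nat)"

definition is_pair :: "('a::finite) rpair \<Rightarrow> bool" where
  "is_pair P \<longleftrightarrow> bij_betw (fst P) UNIV {1..CARD('a)} \<and> bij_betw (snd P) UNIV {1..CARD('a)}"

definition irreducible_pair :: "('a::finite) rpair \<Rightarrow> bool" where
  "irreducible_pair P \<longleftrightarrow> is_pair P \<and>
     (\<forall>k. 1 \<le> k \<and> k < CARD('a) \<longrightarrow> fst P -` {1..k} \<noteq> snd P -` {1..k})"

definition comp :: "'a rpair \<Rightarrow> nat \<Rightarrow> ('a \<Rightarrow> nat)" where
  "comp P e = (if e = 0 then fst P else snd P)"

definition rauzy_move :: "nat \<Rightarrow> ('a::finite) rpair \<Rightarrow> 'a rpair" where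
  "rauzy_move e P =
     (let n = CARD('a); pe = comp P e; po = comp P (1 - e); z = inv pe n;
          po' = (\<lambda>b. if po b \<le> po z then po b
                     else if po b < n then po b + 1
                     else po z + 1)
      in if e = 0 then (pe, po') else (po', pe))"

definition rauzy_step :: "('a::finite) rpair \<Rightarrow> 'a rpair \<Rightarrow> bool" where
  "rauzy_step P q \<longleftrightarrow> (\<exists>e\<in>{0,1}. q = rauzy_move e P)"

definition rauzy_class :: "('a::finite) rpair \<Rightarrow> 'a rpair set" where
  "rauzy_class P = {q. rauzy_step\<^sup>*\<^sup>* P q}"

definition S_perm :: "('a::finite) rpair \<Rightarrow> 'a \<Rightarrow> 'a" where
  "S_perm P \<alpha> =
     (let n = CARD('a); p0 = fst P; p1 = snd P in
      if p1 \<alpha> = 1 then inv p0 1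
      else if p1 \<alpha> = p1 (inv p0 n) + 1 then inv p0 (p0 (inv p1 n) + 1)
      else inv p0 (p0 (inv p1 (p1 \<alpha> - 1)) + 1))"

end

theory Submission
  imports Defs "HOL-Combinatorics.Transposition"
begin

text \<open>Let a and b be the last letters of the top and the bottom row. Then S sends the first
  letter of the bottom row to the first letter of the top row, and the bottom-row successor of a
  letter \<beta> to the top-row successor of \<beta>, or of b when \<beta> = a. Irreducibility gives a \<noteq> b, and
  every Rauzy move preserves this. In this form, S of the pair with its rows exchanged is the
  inverse of S, so a move of type 1, being a move of type 0 conjugated by the exchange of rows,
  needs no separate treatment. A move of type 0 takes b from the end of the bottom row and puts
  it right behind a: only the successors of a and b change, the letter before b becomes the new
  last letter b', and replacing the exceptional pair (a, b) by (a, b') compensates exactly.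
  For a one-letter alphabet all moves are trivial.\<close>

lemma position_bounds:
  fixes f :: "'a \<Rightarrow> nat"
  assumes "bij_betw f UNIV {1..n}"
  shows "1 \<le> f x" "f x \<le> n"
  using bij_betw_apply[OF assms] by auto

lemma position_eq_iff:
  fixes f :: "'a \<Rightarrow> nat"
  assumes "bij_betw f UNIV {1..n}"
  shows "f x = f y \<longleftrightarrow> x = y"
  using assms by (auto simp: bij_betw_def inj_eq)

lemma position_less_last:
  fixes f :: "'a \<Rightarrow> nat"
  assumes "bij_betw f UNIV {1..n}" "f a = n" "x \<noteq> a"
  shows "f x < n"
proof -
  have "f x \<noteq> n" using assms position_eq_iff[OF assms(1), of x a] by simp
  then show ?thesis using position_bounds[OF assms(1), of x] by simp
qed

lemma position_exists:
  fixes f :: "'a \<Rightarrow> nat"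
  assumes "bij_betw f UNIV {1..n}" "1 \<le> k" "k \<le> n"
  obtains x where "f x = k"
  using assms by (metis atLeastAtMost_iff bij_betw_iff_bijections)

lemma inv_position_eq_iff:
  fixes f :: "'a \<Rightarrow> nat"
  assumes "bij_betw f UNIV {1..n}" "1 \<le> k" "k \<le> n"
  shows "inv f k = x \<longleftrightarrow> f x = k"
  by (metis assms position_exists bij_betw_imp_inj_on inv_f_f)

text \<open>Only a \<mapsto> b matters in the transposition, since b, being last in the bottom row, is
  nobody's predecessor there; its symmetry is what makes S_perm_swap_comp immediate.\<close>

lemma S_perm_eq_iff:
  fixes p0 p1 :: "'a::finite \<Rightarrow> nat"
  assumes pair: "is_pair (p0, p1)"
    and a: "p0 a = CARD('a)" and b: "p1 b = CARD('a)" and "a \<noteq> b"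
  shows "S_perm (p0, p1) \<alpha> = \<gamma> \<longleftrightarrow>
    p1 \<alpha> = 1 \<and> p0 \<gamma> = 1 \<or>
    (\<exists>\<beta>. p1 \<alpha> = p1 \<beta> + 1 \<and> p0 \<gamma> = p0 (transpose a b \<beta>) + 1)"
proof -
  let ?n = "CARD('a)"
  have b0: "bij_betw p0 UNIV {1..?n}" and b1: "bij_betw p1 UNIV {1..?n}"
    using pair by (auto simp: is_pair_def)
  have n: "1 \<le> ?n" by (simp add: Suc_leI)
  have inv_a: "inv p0 ?n = a" and inv_b: "inv p1 ?n = b"
    using inv_position_eq_iff[OF b0 n] inv_position_eq_iff[OF b1 n] a b by auto
  have p0b: "p0 b < ?n" using position_less_last[OF b0 a] \<open>a \<noteq> b\<close> by metis
  have S: "S_perm (p0, p1) \<alpha> =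
    (if p1 \<alpha> = 1 then inv p0 1
     else if p1 \<alpha> = p1 a + 1 then inv p0 (p0 b + 1)
     else inv p0 (p0 (inv p1 (p1 \<alpha> - 1)) + 1))"
    by (simp add: S_perm_def inv_a inv_b)
  consider "p1 \<alpha> = 1" | "p1 \<alpha> = p1 a + 1" | "p1 \<alpha> \<noteq> 1" "p1 \<alpha> \<noteq> p1 a + 1" by blast
  then show ?thesis
  proof cases
    case 1
    have nz: "p1 \<beta> \<noteq> 0" for \<beta> using position_bounds(1)[OF b1, of \<beta>] by simp
    show ?thesis
      unfolding S using 1 inv_position_eq_iff[OF b0 order_refl n]
      by (auto simp: nz)
  next
    case 2
    have "p1 \<alpha> = p1 \<beta> + 1 \<longleftrightarrow> \<beta> = a" for \<beta>
      using 2 position_eq_iff[OF b1] by auto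
    then have "(\<exists>\<beta>. p1 \<alpha> = p1 \<beta> + 1 \<and> p0 \<gamma> = p0 (transpose a b \<beta>) + 1)
      \<longleftrightarrow> p0 \<gamma> = p0 b + 1" by simp
    moreover have "p1 \<alpha> \<noteq> 1" using 2 position_bounds[OF b1, of a] by simp
    moreover have "inv p0 (p0 b + 1) = \<gamma> \<longleftrightarrow> p0 \<gamma> = p0 b + 1"
      using inv_position_eq_iff[OF b0, of "p0 b + 1"] p0b by simp
    ultimately show ?thesis unfolding S using 2 by simp
  next
    case 3
    then have "2 \<le> p1 \<alpha>" using position_bounds(1)[OF b1, of \<alpha>] by simp
    then have "1 \<le> p1 \<alpha> - 1" "p1 \<alpha> - 1 \<le> ?n"
      using position_bounds(2)[OF b1, of \<alpha>] by linarith+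
    then obtain \<beta>\<^sub>0 where \<beta>\<^sub>0: "p1 \<beta>\<^sub>0 = p1 \<alpha> - 1"
      using position_exists[OF b1] by blast
    have "inv p1 (p1 \<alpha> - 1) = \<beta>\<^sub>0"
      using inv_position_eq_iff[OF b1, of "p1 \<alpha> - 1"] \<beta>\<^sub>0 position_bounds[OF b1, of \<beta>\<^sub>0] by simp
    moreover have "\<beta>\<^sub>0 \<noteq> a" "\<beta>\<^sub>0 \<noteq> b"
      using \<beta>\<^sub>0 3 \<open>2 \<le> p1 \<alpha>\<close> b position_bounds(2)[OF b1, of \<alpha>] by auto
    moreover have "p1 \<alpha> = p1 \<beta> + 1 \<longleftrightarrow> \<beta> = \<beta>\<^sub>0" for \<beta>
      using \<beta>\<^sub>0 \<open>2 \<le> p1 \<alpha>\<close> position_eq_iff[OF b1] by auto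
    moreover have "inv p0 (p0 \<beta>\<^sub>0 + 1) = \<gamma> \<longleftrightarrow> p0 \<gamma> = p0 \<beta>\<^sub>0 + 1"
      using inv_position_eq_iff[OF b0, of "p0 \<beta>\<^sub>0 + 1"]
        position_less_last[OF b0 a \<open>\<beta>\<^sub>0 \<noteq> a\<close>] by simp
    ultimately show ?thesis unfolding S using 3 by simp
  qed
qed

lemma S_perm_swap_comp:
  fixes p0 p1 :: "'a::finite \<Rightarrow> nat"
  assumes pair: "is_pair (p0, p1)"
    and a: "p0 a = CARD('a)" and b: "p1 b = CARD('a)" and "a \<noteq> b"
  shows "S_perm (p1, p0) \<circ> S_perm (p0, p1) = id"
proof
  fix \<alpha>
  define \<gamma> where "\<gamma> = S_perm (p0, p1) \<alpha>"
  have pair': "is_pair (p1, p0)" using pair by (auto simp: is_pair_def)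
  have "p1 \<alpha> = 1 \<and> p0 \<gamma> = 1 \<or> (\<exists>\<beta>. p1 \<alpha> = p1 \<beta> + 1 \<and> p0 \<gamma> = p0 (transpose a b \<beta>) + 1)"
    using S_perm_eq_iff[OF pair a b \<open>a \<noteq> b\<close>] \<gamma>_def by blast
  then have "p0 \<gamma> = 1 \<and> p1 \<alpha> = 1 \<or> (\<exists>\<beta>. p0 \<gamma> = p0 \<beta> + 1 \<and> p1 \<alpha> = p1 (transpose b a \<beta>) + 1)"
    by (metis transpose_commute transpose_involutory)
  then show "(S_perm (p1, p0) \<circ> S_perm (p0, p1)) \<alpha> = id \<alpha>"
    using S_perm_eq_iff[OF pair' b a] \<open>a \<noteq> b\<close> \<gamma>_def by auto
qed

definition distinct_last_pair :: "('a::finite) rpair \<Rightarrow> bool" where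
  "distinct_last_pair P \<longleftrightarrow> is_pair P \<and> inv (fst P) CARD('a) \<noteq> inv (snd P) CARD('a)"

lemma distinct_last_pair_iff:
  fixes p0 p1 :: "'a::finite \<Rightarrow> nat"
  shows "distinct_last_pair (p0, p1) \<longleftrightarrow>
    is_pair (p0, p1) \<and> (\<exists>a b. p0 a = CARD('a) \<and> p1 b = CARD('a) \<and> a \<noteq> b)"
proof (cases "is_pair (p0, p1)")
  case True
  have n: "1 \<le> CARD('a)" by (simp add: Suc_leI)
  have "bij_betw p0 UNIV {1..CARD('a)}" "bij_betw p1 UNIV {1..CARD('a)}"
    using True by (auto simp: is_pair_def)
  then have "p0 x = CARD('a) \<longleftrightarrow> x = inv p0 CARD('a)" "p1 x = CARD('a) \<longleftrightarrow> x = inv p1 CARD('a)"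
    for x using inv_position_eq_iff[OF _ n order_refl] by metis+
  then show ?thesis using True by (simp add: distinct_last_pair_def)
qed (simp add: distinct_last_pair_def)

lemma distinct_last_pair_swap:
  "distinct_last_pair (prod.swap P) \<longleftrightarrow> distinct_last_pair P"
  by (auto simp: distinct_last_pair_def is_pair_def)

lemma S_perm_eq_inv_swap:
  assumes "distinct_last_pair P"
  shows "S_perm P = inv (S_perm (prod.swap P))"
proof -
  obtain p0 p1 a b where P: "P = (p0, p1)" and pair: "is_pair (p0, p1)"
    and a: "p0 a = CARD('a)" and b: "p1 b = CARD('a)" and "a \<noteq> b"
    using assms by (cases P) (auto simp: distinct_last_pair_iff)
  have "is_pair (p1, p0)" using pair by (auto simp: is_pair_def)
  then have "S_perm (p1, p0) \<circ> S_perm (p0, p1) = id" "S_perm (p0, p1) \<circ> S_perm (p1, p0) = id"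
    using S_perm_swap_comp[OF pair a b \<open>a \<noteq> b\<close>] S_perm_swap_comp[of p1 p0 b a] a b \<open>a \<noteq> b\<close>
    by auto
  then show ?thesis unfolding P by (simp add: inv_unique_comp)
qed

definition move_last_after :: "('a \<Rightarrow> nat) \<Rightarrow> 'a \<Rightarrow> nat \<Rightarrow> 'a \<Rightarrow> nat" where
  "move_last_after p z n x = (if p x \<le> p z then p x else if p x < n then p x + 1 else p z + 1)"

lemma rauzy_move_0:
  fixes P :: "('a::finite) rpair"
  shows "rauzy_move 0 P = (fst P, move_last_after (snd P) (inv (fst P) CARD('a)) CARD('a))"
  by (simp add: rauzy_move_def comp_def Let_def move_last_after_def fun_eq_iff)

lemma rauzy_move_1:
  fixes P :: "('a::finite) rpair"
  shows "rauzy_move 1 P = prod.swap (rauzy_move 0 (prod.swap P))"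
  by (simp add: rauzy_move_def comp_def Let_def)

lemma rauzy_step_iff: "rauzy_step P Q \<longleftrightarrow> Q = rauzy_move 0 P \<or> Q = rauzy_move 1 P"
  by (auto simp: rauzy_step_def)

lemma move_last_after_bij:
  fixes p :: "'a::finite \<Rightarrow> nat"
  assumes p: "bij_betw p UNIV {1..n}" and z: "p z < n"
  shows "bij_betw (move_last_after p z n) UNIV {1..n}"
proof -
  let ?q = "move_last_after p z n"
  have "inj ?q"
  proof (rule injI)
    fix x y assume "?q x = ?q y"
    then have "p x = p y"
      using position_bounds(2)[OF p, of x] position_bounds(2)[OF p, of y] z
      by (auto simp: move_last_after_def split: if_splits)
    then show "x = y" using position_eq_iff[OF p] by blast
  qed
  moreover have "range ?q \<subseteq> {1..n}"
    using position_bounds[OF p] z by (auto simp: move_last_after_def)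
  moreover have "card (range ?q) = card {1..n}"
    using \<open>inj ?q\<close> bij_betw_same_card[OF p] by (simp add: card_image)
  ultimately show ?thesis by (simp add: bij_betw_def card_subset_eq)
qed

lemma move_last_after_predecessor:
  fixes p :: "'a::finite \<Rightarrow> nat"
  assumes p: "bij_betw p UNIV {1..n}" and z: "p z < n" and b: "p b = n"
    and b': "move_last_after p z n b' = n"
    and \<alpha>\<beta>: "p \<alpha> = p \<beta> + 1"
  obtains \<beta>' where "move_last_after p z n \<alpha> = move_last_after p z n \<beta>' + 1"
    and "transpose z b' \<beta>' = transpose z b \<beta>"
proof -
  let ?q = "move_last_after p z n"
  have q: "bij_betw ?q UNIV {1..n}" using move_last_after_bij[OF p z] .
  have q_low: "p x \<le> p z \<Longrightarrow> ?q x = p x"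
    and q_high: "p z < p x \<Longrightarrow> p x < n \<Longrightarrow> ?q x = p x + 1" for x
    by (simp_all add: move_last_after_def)
  have q_b: "?q b = p z + 1" using b z by (simp add: move_last_after_def)
  have "z \<noteq> b" using z b by auto
  have "p \<beta> < n" using \<alpha>\<beta> position_bounds(2)[OF p, of \<alpha>] by simp
  then have "\<beta> \<noteq> b" using b by auto
  \<comment> \<open>The new predecessor \<beta>' of \<alpha> is \<beta>, except in cases 2 (it is b) and 4 (it is z).\<close>
  consider "\<beta> = z" "\<alpha> = b" | "\<beta> = z" "\<alpha> \<noteq> b" | "p \<beta> < p z" | "p z < p \<beta>" "\<alpha> = b"
    | "p z < p \<beta>" "\<alpha> \<noteq> b"
    using position_eq_iff[OF p, of \<beta> z] by linarith
  then show ?thesis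
  proof cases
    case 1
    then have "?q b = n" using q_b \<alpha>\<beta> b by simp
    then have "b' = b" using b' position_eq_iff[OF q] by metis
    then show ?thesis using that[of z] 1 q_low q_b by simp
  next
    case 2
    then have "p \<alpha> < n" using position_less_last[OF p b] by blast
    then have "b \<noteq> b'" using b' q_b \<alpha>\<beta> 2 by auto
    then show ?thesis using that[of b] 2 q_high[of \<alpha>] q_b \<alpha>\<beta> \<open>p \<alpha> < n\<close> \<open>z \<noteq> b\<close> by simp
  next
    case 3
    then have "\<beta> \<noteq> z" by auto
    have "\<beta> \<noteq> b'" using b' q_low[of \<beta>] 3 \<open>p \<beta> < n\<close> by auto
    then show ?thesis
      using that[of \<beta>] 3 q_low[of \<beta>] q_low[of \<alpha>] \<alpha>\<beta> \<open>\<beta> \<noteq> b\<close> \<open>\<beta> \<noteq> z\<close> by simp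
  next
    case 4
    then have "\<beta> \<noteq> z" by auto
    have "?q \<beta> = n" using q_high[of \<beta>] 4 \<alpha>\<beta> b \<open>p \<beta> < n\<close> by simp
    then have "\<beta> = b'" using b' position_eq_iff[OF q] by metis
    then show ?thesis
      using that[of z] 4 q_b q_low[of z] \<open>\<beta> \<noteq> b\<close> \<open>\<beta> \<noteq> z\<close> by simp
  next
    case 5
    then have "\<beta> \<noteq> z" by auto
    have "p \<alpha> < n" using position_less_last[OF p b] 5 by blast
    then have "\<beta> \<noteq> b'" using b' q_high[of \<beta>] 5 \<alpha>\<beta> \<open>p \<beta> < n\<close> by auto
    then show ?thesis
      using that[of \<beta>] 5 q_high[of \<beta>] q_high[of \<alpha>] \<alpha>\<beta> \<open>p \<alpha> < n\<close> \<open>p \<beta> < n\<close>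
        \<open>\<beta> \<noteq> b\<close> \<open>\<beta> \<noteq> z\<close>
      by simp
  qed
qed

lemma move_last_after_last:
  fixes p :: "'a::finite \<Rightarrow> nat"
  assumes p: "bij_betw p UNIV {1..n}" and z: "p z < n"
  obtains b' where "move_last_after p z n b' = n" and "b' \<noteq> z"
proof -
  obtain b' where "move_last_after p z n b' = n"
    using position_exists[OF move_last_after_bij[OF p z], of n] z by auto
  moreover have "move_last_after p z n z \<noteq> n" using z by (simp add: move_last_after_def)
  ultimately show ?thesis using that by blast
qed

lemma S_perm_move_last_after:
  fixes p0 p1 :: "'a::finite \<Rightarrow> nat"
  assumes pair: "is_pair (p0, p1)"
    and a: "p0 a = CARD('a)" and b: "p1 b = CARD('a)" and "a \<noteq> b"
  shows "S_perm (p0, move_last_after p1 a CARD('a)) = S_perm (p0, p1)"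
proof
  fix \<alpha>
  let ?n = "CARD('a)" and ?q = "move_last_after p1 a CARD('a)"
  have b0: "bij_betw p0 UNIV {1..?n}" and b1: "bij_betw p1 UNIV {1..?n}"
    using pair by (auto simp: is_pair_def)
  have a_low: "p1 a < ?n" using position_less_last[OF b1 b] \<open>a \<noteq> b\<close> by blast
  then obtain b' where b': "?q b' = ?n" and "b' \<noteq> a" using move_last_after_last[OF b1] by blast
  have pair': "is_pair (p0, ?q)" using b0 move_last_after_bij[OF b1 a_low] by (simp add: is_pair_def)
  define \<gamma> where "\<gamma> = S_perm (p0, p1) \<alpha>"
  have "p1 \<alpha> = 1 \<and> p0 \<gamma> = 1 \<or> (\<exists>\<beta>. p1 \<alpha> = p1 \<beta> + 1 \<and> p0 \<gamma> = p0 (transpose a b \<beta>) + 1)"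
    using S_perm_eq_iff[OF pair a b \<open>a \<noteq> b\<close>] \<gamma>_def by blast
  then have "?q \<alpha> = 1 \<and> p0 \<gamma> = 1 \<or> (\<exists>\<beta>'. ?q \<alpha> = ?q \<beta>' + 1 \<and> p0 \<gamma> = p0 (transpose a b' \<beta>') + 1)"
  proof
    assume "p1 \<alpha> = 1 \<and> p0 \<gamma> = 1"
    then show ?thesis using position_bounds(1)[OF b1, of a] by (simp add: move_last_after_def)
  next
    assume "\<exists>\<beta>. p1 \<alpha> = p1 \<beta> + 1 \<and> p0 \<gamma> = p0 (transpose a b \<beta>) + 1"
    then obtain \<beta> where "p1 \<alpha> = p1 \<beta> + 1" "p0 \<gamma> = p0 (transpose a b \<beta>) + 1" by blast
    with move_last_after_predecessor[OF b1 a_low b b'] show ?thesis by metis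
  qed
  then show "S_perm (p0, ?q) \<alpha> = S_perm (p0, p1) \<alpha>"
    using S_perm_eq_iff[OF pair' a b'] \<open>b' \<noteq> a\<close> \<gamma>_def by auto
qed

lemma rauzy_move_0_invariant:
  fixes P :: "('a::finite) rpair"
  assumes "distinct_last_pair P"
  shows "distinct_last_pair (rauzy_move 0 P) \<and> S_perm (rauzy_move 0 P) = S_perm P"
proof -
  let ?n = "CARD('a)"
  obtain p0 p1 a b where P: "P = (p0, p1)" and pair: "is_pair (p0, p1)"
    and a: "p0 a = ?n" and b: "p1 b = ?n" and "a \<noteq> b"
    using assms by (cases P) (auto simp: distinct_last_pair_iff)
  have b0: "bij_betw p0 UNIV {1..?n}" and b1: "bij_betw p1 UNIV {1..?n}"
    using pair by (auto simp: is_pair_def)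
  have "inv p0 ?n = a" using inv_position_eq_iff[OF b0 _ order_refl] a by (simp add: Suc_leI)
  then have move: "rauzy_move 0 (p0, p1) = (p0, move_last_after p1 a ?n)" by (simp add: rauzy_move_0)
  have a_low: "p1 a < ?n" using position_less_last[OF b1 b] \<open>a \<noteq> b\<close> by blast
  then obtain b' where "move_last_after p1 a ?n b' = ?n" and "b' \<noteq> a"
    using move_last_after_last[OF b1] by blast
  then have "distinct_last_pair (p0, move_last_after p1 a ?n)"
    using b0 move_last_after_bij[OF b1 a_low] a by (auto simp: distinct_last_pair_iff is_pair_def)
  then show ?thesis using S_perm_move_last_after[OF pair a b \<open>a \<noteq> b\<close>] unfolding P move by simp
qed

lemma rauzy_move_1_invariant:
  fixes P :: "('a::finite) rpair"
  assumes "distinct_last_pair P"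
  shows "distinct_last_pair (rauzy_move 1 P) \<and> S_perm (rauzy_move 1 P) = S_perm P"
proof -
  have swap: "distinct_last_pair (prod.swap P)" using assms by (simp add: distinct_last_pair_swap)
  have "distinct_last_pair (rauzy_move 1 P)"
    using rauzy_move_0_invariant[OF swap] unfolding rauzy_move_1 distinct_last_pair_swap by blast
  moreover have "S_perm (rauzy_move 1 P) = inv (S_perm (rauzy_move 0 (prod.swap P)))"
    using S_perm_eq_inv_swap[OF calculation] unfolding rauzy_move_1 by simp
  ultimately show ?thesis
    using rauzy_move_0_invariant[OF swap] S_perm_eq_inv_swap[OF assms] by simp
qed

lemma rauzy_step_invariant:
  assumes "distinct_last_pair P" and "rauzy_step P Q"
  shows "distinct_last_pair Q \<and> S_perm Q = S_perm P"
proof -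
  have "Q = rauzy_move 0 P \<or> Q = rauzy_move 1 P" using assms(2) by (simp add: rauzy_step_iff)
  then show ?thesis using rauzy_move_0_invariant[OF assms(1)] rauzy_move_1_invariant[OF assms(1)]
    by blast
qed

lemma vimage_all_but_last:
  fixes f :: "'a \<Rightarrow> nat"
  assumes f: "bij_betw f UNIV {1..n}" and c: "f c = n"
  shows "f -` {1..n - 1} = - {c}"
  using position_bounds[OF f] position_less_last[OF f c] c by fastforce

lemma irreducible_distinct_last_pair:
  fixes P :: "('a::finite) rpair"
  assumes irr: "irreducible_pair P" and n: "CARD('a) \<noteq> 1"
  shows "distinct_last_pair P"
proof (rule ccontr)
  let ?n = "CARD('a)"
  assume "\<not> distinct_last_pair P"
  moreover have pair: "is_pair P" using irr by (simp add: irreducible_pair_def)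
  ultimately obtain c where c: "inv (fst P) ?n = c" "inv (snd P) ?n = c"
    by (simp add: distinct_last_pair_def)
  have b0: "bij_betw (fst P) UNIV {1..?n}" and b1: "bij_betw (snd P) UNIV {1..?n}"
    using pair by (auto simp: is_pair_def)
  have "1 \<le> ?n" by (simp add: Suc_leI)
  then have "fst P c = ?n" "snd P c = ?n"
    using c inv_position_eq_iff[OF b0] inv_position_eq_iff[OF b1] by auto
  then have "fst P -` {1..?n - 1} = snd P -` {1..?n - 1}"
    using vimage_all_but_last[OF b0] vimage_all_but_last[OF b1] by simp
  moreover have "1 \<le> ?n - 1" "?n - 1 < ?n" using n \<open>1 \<le> ?n\<close> by linarith+
  ultimately show False using irr by (auto simp: irreducible_pair_def)
qed

lemma rauzy_step_card_1:
  fixes P :: "('a::finite) rpair"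
  assumes "CARD('a) = 1" and "rauzy_step P Q"
  shows "Q = P"
proof -
  obtain u :: 'a where "UNIV = {u}" using assms(1) card_1_singletonE by blast
  then have single: "x = y" for x y :: 'a by (metis UNIV_I singletonD)
  have "move_last_after p z n = p" for p :: "'a \<Rightarrow> nat" and z n
  proof
    fix x show "move_last_after p z n x = p x" using single[of x z] by (simp add: move_last_after_def)
  qed
  then show ?thesis
    using assms(2) unfolding rauzy_step_iff rauzy_move_1 rauzy_move_0 by auto
qed

theorem proposition2p10:
  fixes p q :: "('a::finite) rpair"
  assumes "irreducible_pair p"
    and "q \<in> rauzy_class p"
  shows "S_perm q = S_perm p"
proof -
  have steps: "rauzy_step\<^sup>*\<^sup>* p q" using assms(2) by (simp add: rauzy_class_def)
  show ?thesis
  proof (cases "CARD('a) = 1")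
    case True
    have "q = p" using steps
      by (induction rule: rtranclp_induct) (auto dest: rauzy_step_card_1[OF True])
    then show ?thesis by simp
  next
    case False
    have "distinct_last_pair q \<and> S_perm q = S_perm p" using steps
    proof (induction rule: rtranclp_induct)
      case base
      show ?case using irreducible_distinct_last_pair[OF assms(1) False] by simp
    next
      case (step Q R)
      then show ?case using rauzy_step_invariant by metis
    qed
    then show ?thesis by simp
  qed
qed

end
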